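(* Let $K=\{x\in\mathbb C:|x|=1\}$ with its Borel $\sigma$-algebra $\mathcal Q$, let $A_1=\{e^{i\varphi}:\varphi\in[0,\pi)\}$, $A_2=\{e^{i\varphi}:\varphi\in[\pi,2\pi)\}$, and let $\Delta=\{1,2\}$ with its power set $\mathcal D$. Fix $a\in K$, let $f:K\to K$, $f(x)=ax$, and $g:K\to\Delta$, $g(x)=k$ for $x\in A_k$. Let $T$ be the generator with $T(x,\cdot)=\delta_{(f(x),g(f(x)))}$. If $a$ is not a root of unity, then $\sigma_Q(T)$ equals the Borel $\sigma$-algebra of $K$.
   Context: A generator $[(Q,\mathcal Q),T,(\Delta,\mathcal D)]$ consists of measurable spaces $(Q,\mathcal Q)$ and $(\Delta,\mathcal D)$ and a Markov transition kernel $T$ from $(Q,\mathcal Q)$ to $(Q\times\Delta,\mathcal Q\otimes\mathcal D)$. $\sigma_Q(T)$ denotes the smallest $\sigma$-subalgebra $\mathcal A$ of $\mathcal Q$ such that for every $C\in\mathcal A\otimes\mathcal D$ the function $x\mapsto T(x,C)$ is $\mathcal A$-measurable. *)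

theory Defs
  imports "HOL-Probability.Probability"
begin

definition gen_admissible ::
  "'a measure \<Rightarrow> 'b measure \<Rightarrow> ('a \<Rightarrow> ('a \<times> 'b) measure) \<Rightarrow> 'a set set \<Rightarrow> bool" where
  "gen_admissible Q D T A \<longleftrightarrow>
     sigma_algebra (space Q) A \<and> A \<subseteq> sets Q \<and>
     (\<forall>C \<in> sets (sigma (space Q) A \<Otimes>\<^sub>M D).
        (\<lambda>x. emeasure (T x) C) \<in> borel_measurable (sigma (space Q) A))"

definition sigma_Q ::
  "'a measure \<Rightarrow> 'b measure \<Rightarrow> ('a \<Rightarrow> ('a \<times> 'b) measure) \<Rightarrow> 'a set set" where
  "sigma_Q Q D T = (THE A. gen_admissible Q D T A \<and> (\<forall>B. gen_admissible Q D T B \<longrightarrow> A \<subseteq> B))"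

definition circle :: "complex set" where
  "circle = {x. cmod x = 1}"

definition circle_Q :: "complex measure" where
  "circle_Q = restrict_space borel circle"

definition arcA1 :: "complex set" where
  "arcA1 = {exp (\<i> * complex_of_real \<phi>) | \<phi>. 0 \<le> \<phi> \<and> \<phi> < pi}"

definition arcA2 :: "complex set" where
  "arcA2 = {exp (\<i> * complex_of_real \<phi>) | \<phi>. pi \<le> \<phi> \<and> \<phi> < 2 * pi}"

definition Delta_D :: "nat measure" where
  "Delta_D = count_space {1, 2}"

text \<open>g(x) = k for x in A_k (A_1, A_2 partition the circle).\<close>
definition arc_label :: "complex \<Rightarrow> nat" where
  "arc_label x = (if x \<in> arcA1 then 1 else if x \<in> arcA2 then 2 else undefined)"

end

(* If B is admissible, then testing the kernel on E \<times> {1, 2} and on circle \<times> {1} shows that B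
   contains the preimage of each of its sets under x \<mapsto> a x, and the preimage of A1; hence it
   contains every a^-n A1 with n \<ge> 1. These are half circles whose starting angles
   -n arg a (mod 2 pi) are dense because a is not a root of unity (Kronecker). Differences of two
   such half circles are the arcs c \<le> arg x < d, so arg is B-measurable, and therefore so is the
   identity x = exp (i arg x): B contains all Borel sets. Conversely, the Borel sets are admissible
   because the kernel is the Dirac measure at a measurable function of x. *)

theory Submission
  imports Defs
begin

lemma borel_measurable_if_interval_preimages:
  fixes f :: "'a \<Rightarrow> real"
  assumes range: "\<And>x. x \<in> space M \<Longrightarrow> l \<le> f x \<and> f x < u"
    and "countable D" and dense: "\<And>s t. s < t \<Longrightarrow> \<exists>d\<in>D. s < d \<and> d < t"
    and "\<delta> > 0"
    and intervals: "\<And>c d. c \<in> D \<Longrightarrow> d \<in> D \<Longrightarrow> l < c \<Longrightarrow> c < d \<Longrightarrow> d < u \<Longrightarrow> d - c < \<delta> \<Longrightarrow>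
      {x \<in> space M. c \<le> f x \<and> f x < d} \<in> sets M"
  shows "f \<in> borel_measurable M"
  unfolding borel_measurable_iff_greater
proof
  fix t
  show "{x \<in> space M. t < f x} \<in> sets M"
  proof (cases "t < l")
    case True
    then have "{x \<in> space M. t < f x} = space M" using range by force
    then show ?thesis by simp
  next
    case False
    define I where "I = {(c, d) \<in> D \<times> D. t < c \<and> c < d \<and> d < u \<and> d - c < \<delta>}"
    have "{x \<in> space M. t < f x} = (\<Union>(c, d)\<in>I. {x \<in> space M. c \<le> f x \<and> f x < d})"
    proof (intro equalityI subsetI)
      fix x assume x: "x \<in> {x \<in> space M. t < f x}"
      obtain c where c: "c \<in> D" "max t (f x - \<delta> / 2) < c" "c < f x"
        using dense[of "max t (f x - \<delta> / 2)" "f x"] x \<open>\<delta> > 0\<close> by auto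
      obtain d where d: "d \<in> D" "f x < d" "d < min u (f x + \<delta> / 2)"
        using dense[of "f x" "min u (f x + \<delta> / 2)"] x range \<open>\<delta> > 0\<close> by auto
      have "(c, d) \<in> I" unfolding I_def using c d by auto
      then show "x \<in> (\<Union>(c, d)\<in>I. {x \<in> space M. c \<le> f x \<and> f x < d})"
        using x c d by (intro UN_I[of "(c, d)"]) auto
    qed (auto simp: I_def)
    also have "\<dots> \<in> sets M"
    proof (rule sets.countable_UN'')
      have "I \<subseteq> D \<times> D" unfolding I_def by blast
      then show "countable I" using \<open>countable D\<close> by (blast intro: countable_subset)
      show "(case p of (c, d) \<Rightarrow> {x \<in> space M. c \<le> f x \<and> f x < d}) \<in> sets M"
        if "p \<in> I" for p
        using that False by (auto simp: I_def intro!: intervals)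
    qed
    finally show ?thesis .
  qed
qed

lemma sets_restrict_borel_subset:
  assumes "space M = \<Omega>" and "(\<lambda>x. x) \<in> borel_measurable M"
  shows "sets (restrict_space borel \<Omega>) \<subseteq> sets M"
proof
  fix S assume "S \<in> sets (restrict_space borel \<Omega>)"
  then obtain S' where "S' \<in> sets borel" "S = \<Omega> \<inter> S'"
    unfolding sets_restrict_space by auto
  then show "S \<in> sets M"
    using measurable_sets[OF assms(2), of S'] assms(1) by (simp add: Int_commute)
qed

lemma Arg2pi_borel_measurable: "Arg2pi \<in> borel_measurable borel"
  unfolding borel_measurable_iff_le using closed_Arg2pi2pi_le by (simp add: borel_closed)

lemma gen_admissible_sets_return:
  assumes h: "h \<in> Q \<rightarrow>\<^sub>M Q \<Otimes>\<^sub>M D"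
  shows "gen_admissible Q D (\<lambda>x. return (Q \<Otimes>\<^sub>M D) (h x)) (sets Q)"
proof -
  have sets_eq: "sets (sigma (space Q) (sets Q)) = sets Q"
    by (rule sigma_algebra.sets_measure_of_eq[OF sets.sigma_algebra_axioms])
  have "(\<lambda>x. emeasure (return (Q \<Otimes>\<^sub>M D) (h x)) C) \<in> borel_measurable Q"
    if "C \<in> sets (Q \<Otimes>\<^sub>M D)" for C
    using measurable_compose[OF h borel_measurable_indicator[OF that]] that by simp
  then show ?thesis
    unfolding gen_admissible_def sets_pair_measure_cong[OF sets_eq refl]
      measurable_cong_sets[OF sets_eq refl]
    using sets.sigma_algebra_axioms by blast
qed

lemma gen_admissible_return_rectangle:
  assumes adm: "gen_admissible Q D (\<lambda>x. return (Q \<Otimes>\<^sub>M D) (f x, g x)) A"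
    and E: "E \<in> A" and F: "F \<in> sets D"
  shows "{x \<in> space Q. f x \<in> E \<and> g x \<in> F} \<in> A"
proof -
  let ?N = "sigma (space Q) A"
  have "sigma_algebra (space Q) A" "A \<subseteq> sets Q"
    and meas: "\<And>C. C \<in> sets (?N \<Otimes>\<^sub>M D) \<Longrightarrow>
      (\<lambda>x. emeasure (return (Q \<Otimes>\<^sub>M D) (f x, g x)) C) \<in> borel_measurable ?N"
    using adm unfolding gen_admissible_def by auto
  then have sets_N: "sets ?N = A" and space_N: "space ?N = space Q"
    by (simp_all add: sigma_algebra.sets_measure_of_eq sigma_algebra.space_measure_of_eq)
  have in_Q: "E \<times> F \<in> sets (Q \<Otimes>\<^sub>M D)"
    using E F \<open>A \<subseteq> sets Q\<close> by (intro pair_measureI) auto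
  have in_N: "E \<times> F \<in> sets (?N \<Otimes>\<^sub>M D)"
    using E F sets_N by (intro pair_measureI) auto
  have "(\<lambda>x. indicator (E \<times> F) (f x, g x) :: ennreal) \<in> borel_measurable ?N"
    using meas[OF in_N] by (simp add: emeasure_return[OF in_Q])
  then have "(\<lambda>x. indicator (E \<times> F) (f x, g x) :: ennreal) -` {1} \<inter> space ?N \<in> sets ?N"
    by (rule measurable_sets) simp
  also have "(\<lambda>x. indicator (E \<times> F) (f x, g x) :: ennreal) -` {1} \<inter> space ?N
      = {x \<in> space Q. f x \<in> E \<and> g x \<in> F}"
    using space_N by (auto simp: indicator_def)
  finally show ?thesis
    using sets_N by simp
qed

lemma sigma_Q_eqI:
  assumes "gen_admissible Q D T (sets Q)" and "\<And>A. gen_admissible Q D T A \<Longrightarrow> sets Q \<subseteq> A"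
  shows "sigma_Q Q D T = sets Q"
  unfolding sigma_Q_def
proof (rule the_equality)
  fix A assume "gen_admissible Q D T A \<and> (\<forall>B. gen_admissible Q D T B \<longrightarrow> A \<subseteq> B)"
  then have "A \<subseteq> sets Q" "sets Q \<subseteq> A"
    using assms(1) assms(2)[of A] by auto
  then show "A = sets Q" by (rule antisym)
qed (use assms in auto)

definition half_circle :: "real \<Rightarrow> complex set" where
  "half_circle c = {exp (\<i> * of_real \<phi>) | \<phi>. c \<le> \<phi> \<and> \<phi> < c + pi}"

lemma half_circle_subset_circle: "half_circle c \<subseteq> circle"
  unfolding half_circle_def circle_def by auto

lemma arcA1_eq_half_circle: "arcA1 = half_circle 0"
  unfolding arcA1_def half_circle_def by simp

lemma arcA2_eq_half_circle: "arcA2 = half_circle pi"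
proof -
  have "pi + pi = 2 * pi" by simp
  then show ?thesis unfolding arcA2_def half_circle_def by simp
qed

lemma exp_Arg2pi_circle: "x \<in> circle \<Longrightarrow> exp (\<i> * of_real (Arg2pi x)) = x"
  unfolding circle_def using complex_norm_eq_1_exp by auto

lemma exp_i_add_2pi: "exp (\<i> * of_real (\<phi> + 2 * pi)) = exp (\<i> * of_real \<phi>)"
proof -
  have "\<i> * of_real (\<phi> + 2 * pi) = \<i> * of_real \<phi> + \<i> * (of_int 1 * (of_real pi * 2))"
    by (simp add: algebra_simps)
  then show ?thesis by (metis exp_plus_2pin)
qed

lemma exp_mult_mem_half_circle:
  assumes "x \<in> half_circle c"
  shows "exp (\<i> * of_real s) * x \<in> half_circle (c + s)"
proof -
  obtain \<phi> where \<phi>: "x = exp (\<i> * of_real \<phi>)" "c \<le> \<phi>" "\<phi> < c + pi"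
    using assms unfolding half_circle_def by blast
  then have "exp (\<i> * of_real s) * x = exp (\<i> * of_real (\<phi> + s))"
    by (simp add: mult_exp_exp algebra_simps)
  then show ?thesis
    unfolding half_circle_def using \<phi> by (intro CollectI exI[of _ "\<phi> + s"]) simp
qed

lemma exp_mult_mem_half_circle_iff:
  "exp (\<i> * of_real s) * x \<in> half_circle (c + s) \<longleftrightarrow> x \<in> half_circle c"
proof
  assume "exp (\<i> * of_real s) * x \<in> half_circle (c + s)"
  from exp_mult_mem_half_circle[OF this, of "- s"] show "x \<in> half_circle c"
    by (simp add: mult.assoc[symmetric] mult_exp_exp)
qed (rule exp_mult_mem_half_circle)

lemma mem_half_circle_iff_Arg2pi:
  assumes x: "x \<in> circle" and c: "0 \<le> c" "c \<le> 2 * pi"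
  shows "x \<in> half_circle c \<longleftrightarrow>
    c \<le> Arg2pi x \<and> Arg2pi x < c + pi \<or> c \<le> Arg2pi x + 2 * pi \<and> Arg2pi x + 2 * pi < c + pi"
    (is "_ \<longleftrightarrow> ?first_turn \<or> ?second_turn")
proof
  assume "x \<in> half_circle c"
  then obtain \<phi> where \<phi>: "x = exp (\<i> * of_real \<phi>)" "c \<le> \<phi>" "\<phi> < c + pi"
    unfolding half_circle_def by blast
  show "?first_turn \<or> ?second_turn"
  proof (cases "\<phi> < 2 * pi")
    case True
    then have "Arg2pi x = \<phi>" using \<phi> c by (simp add: Arg2pi_exp)
    then show ?thesis using \<phi> by simp
  next
    case False
    have "x = exp (\<i> * of_real (\<phi> - 2 * pi))"
      using \<phi>(1) exp_i_add_2pi[of "\<phi> - 2 * pi"] by simp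
    then have "Arg2pi x = \<phi> - 2 * pi" using \<phi> c False by (simp add: Arg2pi_exp)
    then show ?thesis using \<phi> by simp
  qed
next
  have "x = exp (\<i> * of_real (Arg2pi x))" "x = exp (\<i> * of_real (Arg2pi x + 2 * pi))"
    using exp_i_add_2pi exp_Arg2pi_circle[OF x] by simp_all
  moreover assume "?first_turn \<or> ?second_turn"
  ultimately show "x \<in> half_circle c"
    unfolding half_circle_def by blast
qed

lemma half_circle_diff_eq:
  assumes x: "x \<in> circle" and "0 \<le> c" "c < d" "d \<le> c + pi" "d \<le> 2 * pi"
  shows "x \<in> half_circle c - half_circle d \<longleftrightarrow> c \<le> Arg2pi x \<and> Arg2pi x < d"
  using mem_half_circle_iff_Arg2pi[OF x, of c] mem_half_circle_iff_Arg2pi[OF x, of d]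
    Arg2pi_ge_0[of x] Arg2pi_lt_2pi[of x] assms by auto

lemma arcA1_iff_Arg2pi:
  assumes "x \<in> circle" shows "x \<in> arcA1 \<longleftrightarrow> Arg2pi x < pi"
  using mem_half_circle_iff_Arg2pi[OF assms, of 0] Arg2pi_ge_0[of x] Arg2pi_lt_2pi[of x]
  unfolding arcA1_eq_half_circle by simp

lemma arc_label_circle:
  assumes "x \<in> circle"
  shows "arc_label x = (if Arg2pi x < pi then 1 else 2)"
  using arcA1_iff_Arg2pi[OF assms] mem_half_circle_iff_Arg2pi[OF assms, of pi] Arg2pi_lt_2pi[of x]
  unfolding arc_label_def arcA2_eq_half_circle by auto

lemma mult_mem_circle: "a \<in> circle \<Longrightarrow> x \<in> circle \<Longrightarrow> a * x \<in> circle"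
  unfolding circle_def by (simp add: norm_mult)

lemma space_circle_Q: "space circle_Q = circle"
  unfolding circle_Q_def by (simp add: space_restrict_space)

lemma rotation_label_measurable:
  assumes a: "a \<in> circle"
  shows "(\<lambda>x. (a * x, arc_label (a * x))) \<in> circle_Q \<rightarrow>\<^sub>M circle_Q \<Otimes>\<^sub>M Delta_D"
proof (rule measurable_Pair)
  have mult: "(\<lambda>x. a * x) \<in> borel_measurable (borel :: complex measure)"
    by (intro borel_measurable_continuous_onI continuous_intros)
  show "(\<lambda>x. a * x) \<in> circle_Q \<rightarrow>\<^sub>M circle_Q"
    unfolding circle_Q_def
    by (rule measurable_restrict_space3[OF mult]) (use a mult_mem_circle in auto)
  have "(\<lambda>x. Arg2pi (a * x)) \<in> borel_measurable circle_Q"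
    unfolding circle_Q_def
    by (intro measurable_restrict_space1 measurable_compose[OF mult Arg2pi_borel_measurable])
  then have "{x \<in> space circle_Q. Arg2pi (a * x) < pi} \<in> sets circle_Q"
    unfolding borel_measurable_iff_less by blast
  then have "(\<lambda>x. if Arg2pi (a * x) < pi then 1 else 2) \<in> circle_Q \<rightarrow>\<^sub>M Delta_D"
    unfolding Delta_D_def by (intro measurable_If) auto
  then show "(\<lambda>x. arc_label (a * x)) \<in> circle_Q \<rightarrow>\<^sub>M Delta_D"
    by (rule measurable_cong[THEN iffD1, rotated])
      (simp add: space_circle_Q arc_label_circle mult_mem_circle[OF a])
qed

(* 2 pi h - n arg a, for n \<ge> 1, is the starting angle of the half circle a^-n A1. *)
definition rotation_angles :: "complex \<Rightarrow> real set" where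
  "rotation_angles a = (\<lambda>(n :: nat, h :: int). 2 * pi * h - Suc n * Arg2pi a) ` UNIV"

lemma countable_rotation_angles: "countable (rotation_angles a)"
  unfolding rotation_angles_def by simp

lemma power_exp_rotation_angle:
  assumes "a \<in> circle" "c \<in> rotation_angles a"
  shows "\<exists>n>0. a ^ n * exp (\<i> * of_real c) = 1"
proof -
  obtain n and h :: int where c: "c = 2 * pi * h - Suc n * Arg2pi a"
    using assms(2) unfolding rotation_angles_def by auto
  have "a ^ Suc n * exp (\<i> * of_real c)
      = exp (of_nat (Suc n) * (\<i> * of_real (Arg2pi a))) * exp (\<i> * of_real c)"
    using exp_Arg2pi_circle[OF assms(1)] by (simp only: exp_of_nat_mult)
  also have "\<dots> = exp (\<i> * of_real (2 * pi * h))"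
    unfolding c mult_exp_exp by (simp add: algebra_simps)
  also have "\<dots> = 1"
    by (simp add: exp_eq_1)
  finally show ?thesis by blast
qed

lemma Arg2pi_over_2pi_irrational:
  assumes a: "a \<in> circle" and not_root: "\<forall>n::nat. n > 0 \<longrightarrow> a ^ n \<noteq> 1"
  shows "Arg2pi a / (2 * pi) \<notin> \<rat>"
proof
  assume "Arg2pi a / (2 * pi) \<in> \<rat>"
  then obtain p q where "q > 0" "Arg2pi a / (2 * pi) = of_int p / of_int q"
    by (metis Rats_cases')
  then have q_Arg: "real (nat q) * Arg2pi a = 2 * pi * p"
    by (simp add: field_simps)
  have "a ^ nat q = exp (of_nat (nat q) * (\<i> * of_real (Arg2pi a)))"
    using exp_Arg2pi_circle[OF a] by (simp only: exp_of_nat_mult)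
  also have "\<dots> = exp (\<i> * of_real (real (nat q) * Arg2pi a))"
    by (simp add: algebra_simps)
  also have "\<dots> = exp (\<i> * of_real (2 * pi * p))"
    unfolding q_Arg ..
  also have "\<dots> = 1"
    by (simp add: exp_eq_1)
  finally show False
    using not_root \<open>q > 0\<close> by simp
qed

lemma rotation_angles_dense:
  assumes a: "a \<in> circle" and not_root: "\<forall>n::nat. n > 0 \<longrightarrow> a ^ n \<noteq> 1" and "s < t"
  shows "\<exists>c\<in>rotation_angles a. s < c \<and> c < t"
proof -
  define \<theta> where "\<theta> = Arg2pi a / (2 * pi)"
  have "- \<theta> \<notin> \<rat>"
    using Arg2pi_over_2pi_irrational[OF a not_root] unfolding \<theta>_def by (metis Rats_minus_iff)
  moreover have "(t - s) / (4 * pi) > 0"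
    using \<open>s < t\<close> by simp
  ultimately obtain h k where "k > 0"
    and approx: "\<bar>of_int k * - \<theta> - of_int h - (s + t) / (4 * pi)\<bar> < (t - s) / (4 * pi)"
    by (rule sequence_of_fractional_parts_is_dense)
  define c where "c = 2 * pi * (- h) - Suc (nat (k - 1)) * Arg2pi a"
  have "c \<in> rotation_angles a"
    unfolding rotation_angles_def c_def by (intro image_eqI[of _ _ "(nat (k - 1), - h)"]) auto
  moreover have "c = 2 * pi * (of_int k * - \<theta> - of_int h)"
    using \<open>k > 0\<close> unfolding c_def \<theta>_def by (simp add: of_nat_diff field_simps)
  moreover have "s / (2 * pi) < of_int k * - \<theta> - of_int h"
    and "of_int k * - \<theta> - of_int h < t / (2 * pi)"
    using approx by (auto simp: abs_less_iff diff_divide_distrib add_divide_distrib)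
  ultimately show ?thesis
    by (auto simp: divide_less_eq less_divide_eq mult.commute)
qed

abbreviation rotation_kernel :: "complex \<Rightarrow> complex \<Rightarrow> (complex \<times> nat) measure" where
  "rotation_kernel a x \<equiv> return (circle_Q \<Otimes>\<^sub>M Delta_D) (a * x, arc_label (a * x))"

context
  fixes a :: complex and B :: "complex set set"
  assumes a: "a \<in> circle"
    and adm: "gen_admissible circle_Q Delta_D (rotation_kernel a) B"
begin

lemma sigma_algebra_admissible: "sigma_algebra circle B"
  using adm unfolding gen_admissible_def space_circle_Q by blast

lemma space_sigma_admissible: "space (sigma circle B) = circle"
  using sigma_algebra_admissible by (rule sigma_algebra.space_measure_of_eq)

lemma sets_sigma_admissible: "sets (sigma circle B) = B"
  using sigma_algebra_admissible by (rule sigma_algebra.sets_measure_of_eq)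

lemma admissible_rotation_vimage:
  assumes "E \<in> B"
  shows "{x \<in> circle. a * x \<in> E} \<in> B"
proof -
  have "{x \<in> circle. a * x \<in> E \<and> arc_label (a * x) \<in> {1, 2}} \<in> B"
    using gen_admissible_return_rectangle[OF adm assms, of "{1, 2}"]
    unfolding Delta_D_def space_circle_Q by simp
  moreover have "arc_label (a * x) \<in> {1, 2}" if "x \<in> circle" for x
    using arc_label_circle[OF mult_mem_circle[OF a that]] by simp
  ultimately show ?thesis
    by (metis (mono_tags, lifting) Collect_cong)
qed

lemma admissible_power_vimage_arcA1:
  assumes "n > 0"
  shows "{x \<in> circle. a ^ n * x \<in> arcA1} \<in> B"
  using assms
proof (induction n rule: nat_induct_non_zero)
  case 1
  have "circle \<in> B"
    using sigma_algebra_admissible by (rule algebra.top[OF sigma_algebra.axioms(1)])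
  then have "{x \<in> circle. a * x \<in> circle \<and> arc_label (a * x) \<in> {1}} \<in> B"
    using gen_admissible_return_rectangle[OF adm, of circle "{1}"]
    unfolding Delta_D_def space_circle_Q by simp
  moreover have "arc_label (a * x) \<in> {1} \<longleftrightarrow> a * x \<in> arcA1" if "x \<in> circle" for x
    using arc_label_circle arcA1_iff_Arg2pi mult_mem_circle[OF a that] by simp
  ultimately show ?case
    using mult_mem_circle[OF a] by (metis (mono_tags, lifting) Collect_cong power_one_right)
next
  case (Suc n)
  have "{x \<in> circle. a * x \<in> {y \<in> circle. a ^ n * y \<in> arcA1}} \<in> B"
    using admissible_rotation_vimage[OF Suc.IH] .
  moreover have "{x \<in> circle. a * x \<in> {y \<in> circle. a ^ n * y \<in> arcA1}}
      = {x \<in> circle. a ^ Suc n * x \<in> arcA1}"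
    using mult_mem_circle[OF a] by (auto simp: ac_simps)
  ultimately show ?case by simp
qed

lemma admissible_half_circle:
  assumes "c \<in> rotation_angles a"
  shows "half_circle c \<in> B"
proof -
  obtain n where "n > 0" and n: "a ^ n * exp (\<i> * of_real c) = 1"
    using power_exp_rotation_angle[OF a assms] by blast
  have "a ^ n = a ^ n * exp (\<i> * of_real c) * exp (\<i> * of_real (- c))"
    by (simp add: mult.assoc exp_minus_inverse)
  then have "a ^ n = exp (\<i> * of_real (- c))"
    using n by simp
  then have "{x \<in> circle. a ^ n * x \<in> arcA1} = half_circle c"
    using half_circle_subset_circle exp_mult_mem_half_circle_iff[of "- c" _ c]
    unfolding arcA1_eq_half_circle by auto
  then show ?thesis
    using admissible_power_vimage_arcA1[OF \<open>n > 0\<close>] by simp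
qed

lemma Arg2pi_measurable_admissible:
  assumes not_root: "\<forall>n::nat. n > 0 \<longrightarrow> a ^ n \<noteq> 1"
  shows "Arg2pi \<in> borel_measurable (sigma circle B)"
proof (rule borel_measurable_if_interval_preimages)
  show "0 \<le> Arg2pi x \<and> Arg2pi x < 2 * pi" for x
    by (simp add: Arg2pi_ge_0 Arg2pi_lt_2pi)
  show "countable (rotation_angles a)"
    by (rule countable_rotation_angles)
  show "\<exists>d\<in>rotation_angles a. s < d \<and> d < t" if "s < t" for s t
    using rotation_angles_dense[OF a not_root that] .
  fix c d assume "c \<in> rotation_angles a" "d \<in> rotation_angles a"
    and "0 < c" "c < d" "d < 2 * pi" "d - c < pi"
  then have "x \<in> half_circle c - half_circle d \<longleftrightarrow> c \<le> Arg2pi x \<and> Arg2pi x < d"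
    if "x \<in> circle" for x
    using half_circle_diff_eq[OF that, of c d] by simp
  then have "{x \<in> circle. c \<le> Arg2pi x \<and> Arg2pi x < d} = half_circle c - half_circle d"
    using half_circle_subset_circle by blast
  moreover have "half_circle c - half_circle d \<in> sets (sigma circle B)"
    using admissible_half_circle \<open>c \<in> rotation_angles a\<close> \<open>d \<in> rotation_angles a\<close>
    by (intro sets.Diff) (simp_all add: sets_sigma_admissible)
  ultimately show
    "{x \<in> space (sigma circle B). c \<le> Arg2pi x \<and> Arg2pi x < d} \<in> sets (sigma circle B)"
    by (simp add: space_sigma_admissible)
qed (rule pi_gt_zero)

lemma sets_circle_Q_subset_admissible:
  assumes not_root: "\<forall>n::nat. n > 0 \<longrightarrow> a ^ n \<noteq> 1"
  shows "sets circle_Q \<subseteq> B"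
proof -
  have "(\<lambda>x. exp (\<i> * of_real (Arg2pi x))) \<in> borel_measurable (sigma circle B)"
    by (rule measurable_compose[OF Arg2pi_measurable_admissible[OF not_root]
          borel_measurable_continuous_onI]) (intro continuous_intros)
  then have "(\<lambda>x. x) \<in> borel_measurable (sigma circle B)"
    by (rule measurable_cong[THEN iffD1, rotated])
      (simp add: space_sigma_admissible exp_Arg2pi_circle)
  then show ?thesis
    using sets_restrict_borel_subset[OF space_sigma_admissible]
    unfolding circle_Q_def sets_sigma_admissible by simp
qed

end

theorem mainTheorem11:
  fixes a :: complex
  assumes "a \<in> circle"
    and "\<forall>n::nat. n > 0 \<longrightarrow> a ^ n \<noteq> 1"
  shows "sigma_Q circle_Q Delta_D
           (\<lambda>x. return (circle_Q \<Otimes>\<^sub>M Delta_D) (a * x, arc_label (a * x)))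
         = sets circle_Q"
proof (rule sigma_Q_eqI)
  show "gen_admissible circle_Q Delta_D (rotation_kernel a) (sets circle_Q)"
    using gen_admissible_sets_return[OF rotation_label_measurable[OF assms(1)]] .
  show "sets circle_Q \<subseteq> A" if "gen_admissible circle_Q Delta_D (rotation_kernel a) A" for A
    using sets_circle_Q_subset_admissible[OF assms(1) that assms(2)] .
qed

end
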